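(* Let $\psi_2$ be a finite pruned graph without half-loops such that every connected component of $\psi_2$ has positive order, and let $\psi_1$ be a proper subgraph of $\psi_2$. Then $\mathrm{ord}(\psi_1)<\mathrm{ord}(\psi_2)$.
   Context: Graphs may have multiple edges and whole-loops. The order of a graph is $\mathrm{ord}(\psi)=|E_\psi|-|V_\psi|$, with $E_\psi$ the undirected edges. A graph is pruned if every vertex has degree at least two (degree = number of directed edges with that tail; a whole-loop contributes two). *)

theory Defs
  imports Main
begin

text \<open>A graph in the sense of Serre: vertex set, set of directed edges (darts),
  a tail map and an involution (reversal) on the darts.  Undirected edges are the orbits of the involution.\<close>

record ('v, 'd) graph =
  verts :: "'v set"
  darts :: "'d set"
  tl :: "'d \<Rightarrow> 'v"
  rv :: "'d \<Rightarrow> 'd"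

definition is_graph :: "('v, 'd) graph \<Rightarrow> bool" where
  "is_graph G \<longleftrightarrow> tl G ` darts G \<subseteq> verts G \<and> rv G ` darts G \<subseteq> darts G
     \<and> (\<forall>d\<in>darts G. rv G (rv G d) = d)"

definition finite_graph :: "('v, 'd) graph \<Rightarrow> bool" where
  "finite_graph G \<longleftrightarrow> finite (verts G) \<and> finite (darts G)"

definition hd :: "('v, 'd) graph \<Rightarrow> 'd \<Rightarrow> 'v" where
  "hd G d = tl G (rv G d)"

definition uedges :: "('v, 'd) graph \<Rightarrow> 'd set set" where
  "uedges G = (\<lambda>d. {d, rv G d}) ` darts G"

definition ord :: "('v, 'd) graph \<Rightarrow> int" where
  "ord G = int (card (uedges G)) - int (card (verts G))"

definition no_half_loops :: "('v, 'd) graph \<Rightarrow> bool" where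
  "no_half_loops G \<longleftrightarrow> (\<forall>d\<in>darts G. rv G d \<noteq> d)"

definition degree :: "('v, 'd) graph \<Rightarrow> 'v \<Rightarrow> nat" where
  "degree G v = card {d \<in> darts G. tl G d = v}"

definition pruned :: "('v, 'd) graph \<Rightarrow> bool" where
  "pruned G \<longleftrightarrow> (\<forall>v\<in>verts G. degree G v \<ge> 2)"

definition subgraph :: "('v, 'd) graph \<Rightarrow> ('v, 'd) graph \<Rightarrow> bool" where
  "subgraph H G \<longleftrightarrow> is_graph H \<and> verts H \<subseteq> verts G \<and> darts H \<subseteq> darts G
     \<and> (\<forall>d\<in>darts H. tl H d = tl G d \<and> rv H d = rv G d)"

definition proper_subgraph :: "('v, 'd) graph \<Rightarrow> ('v, 'd) graph \<Rightarrow> bool" where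
  "proper_subgraph H G \<longleftrightarrow> subgraph H G \<and> (verts H \<noteq> verts G \<or> darts H \<noteq> darts G)"

definition adj :: "('v, 'd) graph \<Rightarrow> ('v \<times> 'v) set" where
  "adj G = {(tl G d, hd G d) | d. d \<in> darts G}"

definition component :: "('v, 'd) graph \<Rightarrow> 'v \<Rightarrow> ('v, 'd) graph" where
  "component G v =
     (let C = {w. (v, w) \<in> (adj G)\<^sup>*} in
      G\<lparr>verts := C, darts := {d \<in> darts G. tl G d \<in> C}\<rparr>)"

end

theory Submission
  imports Defs
begin

text \<open>Without half-loops every undirected edge consists of exactly two darts, so
  \<open>2 \<cdot> ord \<psi> = |darts| - 2 |verts|\<close>.  Removing the vertex set \<open>W\<close> and some darts from
  \<open>\<psi>\<^sub>2\<close> therefore changes twice the order by \<open>|removed darts| - 2 |W|\<close>.  All darts with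
  tail in \<open>W\<close> are removed, and by pruning there are at least \<open>2 |W|\<close> of them.  Equality
  would force these to be all removed darts, every vertex of \<open>W\<close> to have degree two
  and \<open>W\<close> to be closed under adjacency; then \<open>W\<close> is empty (nothing was removed) or
  contains a component in which darts and vertices balance, i.e. of order zero.\<close>

lemma card_orbits_fixfree_involution:
  assumes "finite D" and "\<forall>d\<in>D. r d \<in> D \<and> r (r d) = d \<and> r d \<noteq> d"
  shows "2 * card ((\<lambda>d. {d, r d}) ` D) = card D"
proof -
  let ?C = "(\<lambda>d. {d, r d}) ` D"
  have "2 * card ?C = card (\<Union>?C)"
  proof (rule card_partition)
    show "finite ?C" "finite (\<Union>?C)" using assms by auto
    show "card c = 2" if "c \<in> ?C" for c using that assms(2) by auto
  next
    have orbit: "{a, r a} = {x, r x}" if "a \<in> D" "x \<in> {a, r a}" for a x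
      using that assms(2) by auto
    fix c1 c2 assume "c1 \<in> ?C" "c2 \<in> ?C" "c1 \<noteq> c2"
    then obtain a b where ab: "a \<in> D" "b \<in> D" and c: "c1 = {a, r a}" "c2 = {b, r b}" by blast
    show "c1 \<inter> c2 = {}"
    proof (rule ccontr)
      assume "c1 \<inter> c2 \<noteq> {}"
      then obtain x where "x \<in> c1" "x \<in> c2" by blast
      then have "c1 = c2" using orbit[OF ab(1), of x] orbit[OF ab(2), of x] c by simp
      with \<open>c1 \<noteq> c2\<close> show False ..
    qed
  qed
  moreover have "\<Union>?C = D" using assms(2) by auto
  ultimately show ?thesis by simp
qed

lemma double_ord:
  assumes "is_graph G" and "no_half_loops G" and "finite (darts G)"
  shows "2 * ord G = int (card (darts G)) - 2 * int (card (verts G))"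
proof -
  have "2 * card (uedges G) = card (darts G)"
    unfolding uedges_def
    using assms by (intro card_orbits_fixfree_involution) (auto simp: is_graph_def no_half_loops_def)
  then have "2 * int (card (uedges G)) = int (card (darts G))" by (metis of_nat_mult of_nat_numeral)
  then show ?thesis unfolding ord_def by (simp add: right_diff_distrib)
qed

lemma card_darts_tail_in:
  assumes "finite (darts G)" and "finite S"
  shows "card {d \<in> darts G. tl G d \<in> S} = (\<Sum>v\<in>S. degree G v)"
proof -
  have "{d \<in> darts G. tl G d \<in> S} = (\<Union>v\<in>S. {d \<in> darts G. tl G d = v})" by auto
  also have "card \<dots> = (\<Sum>v\<in>S. degree G v)"
    unfolding degree_def using assms by (intro card_UN_disjoint) auto
  finally show ?thesis .
qed

lemma pruned_two_card_le_darts_tail_in: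
  assumes "pruned G" and "finite (darts G)" and "finite W" and "W \<subseteq> verts G"
  shows "2 * card W \<le> card {d \<in> darts G. tl G d \<in> W}"
proof -
  have "\<forall>w\<in>W. 2 \<le> degree G w" using assms(1,4) unfolding pruned_def by blast
  then have "(\<Sum>w\<in>W. 2) \<le> (\<Sum>w\<in>W. degree G w)" by (intro sum_mono) blast
  then show ?thesis using card_darts_tail_in[OF assms(2,3)] by simp
qed

lemma pruned_degree_two_if_darts_tail_in_le:
  assumes "pruned G" and "finite (darts G)" and "finite W" and "W \<subseteq> verts G"
    and "card {d \<in> darts G. tl G d \<in> W} \<le> 2 * card W"
  shows "\<forall>w\<in>W. degree G w = 2"
proof
  fix w assume "w \<in> W"
  have "(\<Sum>v\<in>W. 2) = (\<Sum>v\<in>W. degree G v)"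
    using assms(5) pruned_two_card_le_darts_tail_in[OF assms(1-4)] card_darts_tail_in[OF assms(2,3)]
    by simp
  moreover have "\<forall>w\<in>W. 2 \<le> degree G w" using assms(1,4) unfolding pruned_def by blast
  ultimately show "degree G w = 2"
    using sum_mono_inv[of "\<lambda>_. 2" W "degree G" w] \<open>w \<in> W\<close> assms(3) by auto
qed

lemma subgraph_no_half_loops:
  "subgraph H G \<Longrightarrow> no_half_loops G \<Longrightarrow> no_half_loops H"
  unfolding subgraph_def no_half_loops_def by auto

lemma double_ord_diff_subgraph:
  assumes "subgraph H G" and "is_graph G" and "no_half_loops G" and "finite_graph G"
  shows "2 * (ord G - ord H)
    = int (card (darts G - darts H)) - 2 * int (card (verts G - verts H))"
proof -
  have incl: "verts H \<subseteq> verts G" "darts H \<subseteq> darts G" and "is_graph H"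
    using assms(1) unfolding subgraph_def by auto
  have fin: "finite (verts G)" "finite (darts G)" using assms(4) unfolding finite_graph_def by auto
  have "2 * ord G = int (card (darts G)) - 2 * int (card (verts G))"
    using assms(2,3) fin(2) by (rule double_ord)
  moreover have "2 * ord H = int (card (darts H)) - 2 * int (card (verts H))"
    using \<open>is_graph H\<close> subgraph_no_half_loops[OF assms(1,3)] finite_subset[OF incl(2) fin(2)]
    by (rule double_ord)
  moreover have "card (verts G - verts H) = card (verts G) - card (verts H)"
    and "card (darts G - darts H) = card (darts G) - card (darts H)"
    using card_Diff_subset[OF finite_subset[OF incl(1) fin(1)] incl(1)]
      card_Diff_subset[OF finite_subset[OF incl(2) fin(2)] incl(2)] by simp_all
  moreover have "card (verts H) \<le> card (verts G)" "card (darts H) \<le> card (darts G)"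
    using card_mono[OF fin(1) incl(1)] card_mono[OF fin(2) incl(2)] .
  ultimately show ?thesis unfolding right_diff_distrib by linarith
qed

lemma subgraph_tl_notin_verts:
  assumes "subgraph H G" and "d \<in> darts G" and "tl G d \<notin> verts H"
  shows "d \<notin> darts H"
  using assms unfolding subgraph_def is_graph_def by auto

lemma verts_component: "verts (component G w) = {v. (w, v) \<in> (adj G)\<^sup>*}"
  and darts_component: "darts (component G w) = {d \<in> darts G. tl G d \<in> verts (component G w)}"
  and tl_component: "tl (component G w) = tl G"
  and rv_component: "rv (component G w) = rv G"
  unfolding component_def Let_def by simp_all

lemma hd_in_component:
  assumes "d \<in> darts G" and "tl G d \<in> verts (component G w)"
  shows "hd G d \<in> verts (component G w)"
proof -
  have "(tl G d, hd G d) \<in> adj G" unfolding adj_def using assms(1) by auto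
  with assms(2) show ?thesis unfolding verts_component by (blast intro: rtrancl_into_rtrancl)
qed

lemma is_graph_component:
  assumes "is_graph G"
  shows "is_graph (component G w)"
  using assms hd_in_component[of _ G w]
  unfolding is_graph_def darts_component tl_component rv_component hd_def by auto

lemma no_half_loops_component:
  "no_half_loops G \<Longrightarrow> no_half_loops (component G w)"
  unfolding no_half_loops_def darts_component rv_component by simp

lemma verts_component_subset:
  assumes "\<forall>d\<in>darts G. tl G d \<in> W \<longrightarrow> hd G d \<in> W" and "w \<in> W"
  shows "verts (component G w) \<subseteq> W"
proof
  fix v assume "v \<in> verts (component G w)"
  then have "(w, v) \<in> (adj G)\<^sup>*" by (simp add: verts_component)
  then show "v \<in> W"
  proof (induction rule: rtrancl_induct)
    case base show ?case by (rule assms(2))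
  next
    case (step u v)
    then show ?case using assms(1) unfolding adj_def by auto
  qed
qed

lemma ord_component_degree_two:
  assumes "is_graph G" and "no_half_loops G" and "finite (darts G)"
    and "finite (verts (component G w))"
    and "\<forall>v\<in>verts (component G w). degree G v = 2"
  shows "ord (component G w) = 0"
proof -
  let ?K = "component G w"
  have "card (darts ?K) = (\<Sum>v\<in>verts ?K. degree G v)"
    by (subst darts_component) (rule card_darts_tail_in[OF assms(3,4)])
  also have "\<dots> = 2 * card (verts ?K)" using assms(5) by simp
  finally have "card (darts ?K) = 2 * card (verts ?K)" .
  moreover have "finite (darts ?K)"
    using assms(3) by (rule rev_finite_subset) (auto simp: darts_component)
  then have "2 * ord ?K = int (card (darts ?K)) - 2 * int (card (verts ?K))"
    using assms(1,2) by (intro double_ord is_graph_component no_half_loops_component)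
  ultimately show ?thesis by simp
qed

lemma removed_verts_closed:
  assumes "subgraph H G" and "is_graph G"
    and "darts G - darts H \<subseteq> {d \<in> darts G. tl G d \<in> verts G - verts H}"
  shows "\<forall>d\<in>darts G. tl G d \<in> verts G - verts H \<longrightarrow> hd G d \<in> verts G - verts H"
proof (intro ballI impI)
  fix d assume d: "d \<in> darts G" "tl G d \<in> verts G - verts H"
  have "rv G d \<notin> darts H"
  proof
    assume "rv G d \<in> darts H"
    then have "rv G (rv G d) \<in> darts H" using assms(1) unfolding subgraph_def is_graph_def by auto
    then have "d \<in> darts H" using assms(2) d(1) unfolding is_graph_def by simp
    with subgraph_tl_notin_verts[OF assms(1) d(1)] d(2) show False by blast
  qed
  moreover have "rv G d \<in> darts G" using assms(2) d(1) unfolding is_graph_def by auto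
  ultimately show "hd G d \<in> verts G - verts H" using assms(3) unfolding hd_def by auto
qed

lemma closed_degree_two_verts_empty:
  assumes "is_graph G" and "finite_graph G" and "no_half_loops G"
    and "\<forall>v\<in>verts G. ord (component G v) > 0"
    and "W \<subseteq> verts G" and "\<forall>w\<in>W. degree G w = 2"
    and "\<forall>d\<in>darts G. tl G d \<in> W \<longrightarrow> hd G d \<in> W"
  shows "W = {}"
proof (rule ccontr)
  assume "W \<noteq> {}"
  then obtain w where "w \<in> W" by blast
  have KW: "verts (component G w) \<subseteq> W" using assms(7) \<open>w \<in> W\<close> by (rule verts_component_subset)
  have "ord (component G w) = 0"
  proof (rule ord_component_degree_two)
    show "finite (darts G)" using assms(2) unfolding finite_graph_def by simp
    show "finite (verts (component G w))"
      using assms(2,5) KW unfolding finite_graph_def by (meson finite_subset subset_trans)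
  qed (use assms(1,3,6) KW in auto)
  moreover have "ord (component G w) > 0" using assms(4,5) \<open>w \<in> W\<close> by blast
  ultimately show False by simp
qed

lemma proper_subgraph_two_card_removed_verts_less:
  assumes "is_graph G" and "finite_graph G" and "pruned G" and "no_half_loops G"
    and "\<forall>v\<in>verts G. ord (component G v) > 0"
    and "proper_subgraph H G"
  shows "2 * card (verts G - verts H) < card (darts G - darts H)"
proof (rule ccontr)
  let ?W = "verts G - verts H" and ?R = "darts G - darts H"
  define A where "A = {d \<in> darts G. tl G d \<in> ?W}"
  assume "\<not> 2 * card ?W < card ?R"
  have sub: "subgraph H G" and proper: "verts H \<noteq> verts G \<or> darts H \<noteq> darts G"
    using assms(6) unfolding proper_subgraph_def by auto
  have incl: "verts H \<subseteq> verts G" "darts H \<subseteq> darts G" using sub unfolding subgraph_def by auto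
  have fin: "finite ?W" "finite (darts G)" using assms(2) unfolding finite_graph_def by auto
  have "A \<subseteq> ?R" unfolding A_def using subgraph_tl_notin_verts[OF sub] by blast
  moreover have "2 * card ?W \<le> card A"
    unfolding A_def using assms(3) fin(2,1) by (rule pruned_two_card_le_darts_tail_in) blast
  ultimately have "A = ?R"
    using \<open>\<not> 2 * card ?W < card ?R\<close> fin(2) card_mono[of ?R A] by (intro card_subset_eq) auto
  have "card A \<le> 2 * card ?W" using \<open>A = ?R\<close> \<open>\<not> 2 * card ?W < card ?R\<close> by simp
  then have deg2: "\<forall>w\<in>?W. degree G w = 2"
    unfolding A_def by (rule pruned_degree_two_if_darts_tail_in_le[OF assms(3) fin(2,1) Diff_subset])
  have closed: "\<forall>d\<in>darts G. tl G d \<in> ?W \<longrightarrow> hd G d \<in> ?W"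
    using \<open>A = ?R\<close> unfolding A_def by (intro removed_verts_closed[OF sub assms(1)] equalityD2)
  have "?W = {}" by (rule closed_degree_two_verts_empty[OF assms(1,2,4,5) Diff_subset deg2 closed])
  then have "A = {}" unfolding A_def by blast
  have "verts H = verts G" using \<open>?W = {}\<close> incl(1) by blast
  moreover have "darts H = darts G" using \<open>A = {}\<close> \<open>A = ?R\<close> incl(2) by blast
  ultimately show False using proper by simp
qed

theorem theorem2p8:
  fixes \<psi>1 \<psi>2 :: "('v, 'd) graph"
  assumes "is_graph \<psi>2" and "finite_graph \<psi>2" and "pruned \<psi>2" and "no_half_loops \<psi>2"
    and "\<forall>v\<in>verts \<psi>2. ord (component \<psi>2 v) > 0"
    and "proper_subgraph \<psi>1 \<psi>2"
  shows "ord \<psi>1 < ord \<psi>2"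
proof -
  have "subgraph \<psi>1 \<psi>2" using assms(6) unfolding proper_subgraph_def by simp
  then have "2 * (ord \<psi>2 - ord \<psi>1)
      = int (card (darts \<psi>2 - darts \<psi>1)) - 2 * int (card (verts \<psi>2 - verts \<psi>1))"
    using assms(1,4,2) by (rule double_ord_diff_subgraph)
  moreover have "2 * card (verts \<psi>2 - verts \<psi>1) < card (darts \<psi>2 - darts \<psi>1)"
    using assms by (rule proper_subgraph_two_card_removed_verts_less)
  then have "2 * int (card (verts \<psi>2 - verts \<psi>1)) < int (card (darts \<psi>2 - darts \<psi>1))"
    by (metis of_nat_less_iff of_nat_mult of_nat_numeral)
  ultimately show ?thesis by simp
qed

end
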